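(* Let $X=\mathcal A^{\mathbb Z^d}$ ($\mathcal A$ finite, $d\ge1$) and let $\phi\colon X\to\mathbb R$ be continuous with $\sum_{n=1}^\infty n^{d-1}\mathrm{var}_n\phi<\infty$. If there exist shift-invariant probability measures $\mu,\nu$ with $\int\phi\,d\mu\ne\int\phi\,d\nu$, then there exists a cylinder set $C$ such that $\eta(C)=0$ for every $\eta\in\mathrm{MM}(\phi)$.
   Context: Shift $(\sigma^{\boldsymbol n}x)_{\boldsymbol m}=x_{\boldsymbol n+\boldsymbol m}$. $\mathrm{var}_n\phi=\sup\{|\phi(x)-\phi(y)|:x|_{[-n,n]^d}=y|_{[-n,n]^d}\}$. $\mathrm{MM}(\phi)$ is the set of shift-invariant probability measures $\eta$ with $\int\phi\,d\eta=\sup_\nu\int\phi\,d\nu$ (supremum over shift-invariant probability measures). A cylinder set is $\{x:x|_\Lambda=w\}$ for finite $\Lambda\subset\mathbb Z^d$, $w\in\mathcal A^\Lambda$. *)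

theory Defs
  imports "HOL-Analysis.Analysis" "HOL-Probability.Probability"
begin

text \<open>Full shift X = A^(Z^d): configurations are functions int^'d => 'a,
  where 'a is a finite alphabet carrying the discrete topology, and X carries
  the product topology (library instance for function types).
  The dimension d is CARD('d) (>= 1 automatically).\<close>

definition shift :: "int^'d \<Rightarrow> (int^'d \<Rightarrow> 'a) \<Rightarrow> (int^'d \<Rightarrow> 'a)" where
  "shift n x = (\<lambda>m. x (n + m))"

definition box :: "nat \<Rightarrow> (int^'d) set" where
  "box n = {m. \<forall>i. \<bar>m $ i\<bar> \<le> int n}"

definition var :: "nat \<Rightarrow> ((int^'d \<Rightarrow> 'a) \<Rightarrow> real) \<Rightarrow> real" where
  "var n \<phi> = (SUP (x, y) \<in> {(x, y). \<forall>m \<in> box n. x m = y m}. \<bar>\<phi> x - \<phi> y\<bar>)"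

definition inv_measures :: "((int^'d \<Rightarrow> 'a::topological_space) measure) set" where
  "inv_measures = {M. sets M = sets borel \<and> prob_space M \<and>
       (\<forall>n. \<forall>A \<in> sets M. emeasure M (shift n -` A) = emeasure M A)}"

definition MM :: "((int^'d \<Rightarrow> 'a::topological_space) \<Rightarrow> real) \<Rightarrow> (int^'d \<Rightarrow> 'a) measure set" where
  "MM \<phi> = {\<eta> \<in> inv_measures.
       integral\<^sup>L \<eta> \<phi> = (SUP \<nu> \<in> inv_measures. integral\<^sup>L \<nu> \<phi>)}"

definition cylinder :: "(int^'d) set \<Rightarrow> (int^'d \<Rightarrow> 'a) \<Rightarrow> (int^'d \<Rightarrow> 'a) set" where
  "cylinder \<Lambda> w = {x. \<forall>m \<in> \<Lambda>. x m = w m}"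

end

theory Submission
  imports Defs
begin

(* Let beta be the largest mean of phi over invariant measures and nu an invariant measure with
   mean alpha < beta.  On a large box B_n choose a pattern w whose Birkhoff sum is at most
   |B_n| alpha, and, from a maximizing measure eta, a pattern v whose Birkhoff sum is at least
   |B_n| beta.  Pasting v over well-separated occurrences of w raises the Birkhoff sum over a box
   B_L by a fixed positive amount per occurrence; the summability of n^(d-1) var_n phi makes the
   boundary errors of each paste independent of n and L.  Periodizing the result gives a periodic
   orbit, whose mean is at most beta, at a cost O(L^(d-1)).  Averaging over eta, the total gain is
   proportional to eta[w] |B_L| ~ eta[w] L^d, so eta[w] = 0. *)

section \<open>Boxes and shells in the lattice\<close>

definition maxnorm :: "int^'d::finite \<Rightarrow> nat" where
  "maxnorm k = nat (Max (range (\<lambda>i. \<bar>k$i\<bar>)))"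

definition shell :: "nat \<Rightarrow> (int^'d::finite) set" where
  "shell n = {k. maxnorm k = n}"

lemma abs_le_maxnorm: "\<bar>k$i\<bar> \<le> int (maxnorm k)"
proof -
  have "\<bar>k$i\<bar> \<le> Max (range (\<lambda>i. \<bar>k$i\<bar>))" by (rule Max_ge) auto
  then show ?thesis unfolding maxnorm_def by linarith
qed

lemma maxnorm_attained: "\<exists>i. \<bar>k$i\<bar> = int (maxnorm k)"
proof -
  have "Max (range (\<lambda>i. \<bar>k$i\<bar>)) \<in> range (\<lambda>i. \<bar>k$i\<bar>)" by (rule Max_in) auto
  then obtain i where "Max (range (\<lambda>i. \<bar>k$i\<bar>)) = \<bar>k$i\<bar>" by (metis imageE)
  then show ?thesis unfolding maxnorm_def by (intro exI[of _ i]) auto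
qed

lemma maxnorm_le_iff: "maxnorm k \<le> n \<longleftrightarrow> (\<forall>i. \<bar>k$i\<bar> \<le> int n)"
  by (metis maxnorm_attained abs_le_maxnorm order.trans of_nat_le_iff)

lemma maxnorm_eqI: "(\<And>i. \<bar>k$i\<bar> \<le> int n) \<Longrightarrow> \<bar>k$j\<bar> = int n \<Longrightarrow> maxnorm k = n"
  by (metis abs_le_maxnorm antisym maxnorm_le_iff of_nat_le_iff)

lemma mem_box_iff: "k \<in> box n \<longleftrightarrow> maxnorm k \<le> n"
  by (simp add: box_def maxnorm_le_iff)

lemma maxnorm_add_le: "maxnorm (a + b) \<le> maxnorm a + maxnorm b"
  unfolding maxnorm_le_iff vector_add_component of_nat_add
  by (metis abs_triangle_ineq add_mono abs_le_maxnorm order_trans)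

lemma maxnorm_uminus [simp]: "maxnorm (- a) = maxnorm a"
  by (metis abs_minus_cancel antisym maxnorm_le_iff order_refl vector_uminus_component)

lemma maxnorm_minus_commute: "maxnorm (a - b) = maxnorm (b - a)"
  by (metis minus_diff_eq maxnorm_uminus)

lemma maxnorm_zero [simp]: "maxnorm 0 = 0"
  by (simp add: maxnorm_def)

lemma maxnorm_diff_triangle: "maxnorm (a - c) \<le> maxnorm (a - b) + maxnorm (b - c)"
  using maxnorm_add_le[of "a - b" "b - c"] by simp

lemma zero_in_box [simp]: "0 \<in> box n"
  by (simp add: mem_box_iff)

lemma box_nonempty: "box n \<noteq> {}"
  using zero_in_box by blast

lemma mem_translate_box_iff: "k \<in> (+) s ` box n \<longleftrightarrow> k - s \<in> box n"
proof
  assume "k - s \<in> box n"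
  then show "k \<in> (+) s ` box n" by (rule image_eqI[rotated]) simp
qed auto

lemma bij_betw_vec_nth_Pi:
  "bij_betw vec_nth {m::'b^'d::finite. \<forall>i. m$i \<in> A i} (PiE UNIV A)"
  by (rule bij_betwI[where g = vec_lambda]) auto

lemma card_vec_Pi: "card {m::'b^'d::finite. \<forall>i. m$i \<in> A i} = (\<Prod>i\<in>UNIV. card (A i))"
  using bij_betw_same_card[OF bij_betw_vec_nth_Pi] by (simp add: card_PiE)

lemma finite_vec_Pi:
  assumes "\<And>i. finite (A i)"
  shows "finite {m::'b^'d::finite. \<forall>i. m$i \<in> A i}"
proof -
  have "finite (PiE UNIV A)" using assms by (intro finite_PiE) auto
  then show ?thesis using bij_betw_finite[OF bij_betw_vec_nth_Pi] by blast
qed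

lemma box_eq_Pi: "box n = {m::int^'d::finite. \<forall>i. m$i \<in> {- int n..int n}}"
  unfolding box_def atLeastAtMost_iff abs_le_iff by (meson minus_le_iff)

lemma finite_box [simp]: "finite (box n)"
  unfolding box_eq_Pi by (rule finite_vec_Pi) simp

lemma card_box: "card (box n :: (int^'d::finite) set) = (2*n+1) ^ CARD('d)"
  unfolding box_eq_Pi card_vec_Pi by (simp add: nat_add_distrib nat_mult_distrib)

lemma finite_shell [simp]: "finite (shell n)"
  by (rule finite_subset[OF _ finite_box[of n]]) (auto simp: shell_def mem_box_iff)

lemma card_box_face:
  fixes i :: "'d::finite"
  shows "card {m::int^'d. m \<in> box n \<and> m$i = c} \<le> (2*n+1) ^ (CARD('d) - 1)"
proof -
  define A where "A j = (if j = i then {c} else {- int n..int n})" for j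
  have "{m. m \<in> box n \<and> m$i = c} \<subseteq> {m::int^'d. \<forall>j. m$j \<in> A j}"
    by (auto simp: box_def A_def abs_le_iff) (meson minus_le_iff)
  then have "card {m. m \<in> box n \<and> m$i = c} \<le> card {m::int^'d. \<forall>j. m$j \<in> A j}"
    by (rule card_mono[rotated]) (rule finite_vec_Pi, simp add: A_def)
  also have "\<dots> = (\<Prod>j\<in>UNIV. card (A j))"
    by (rule card_vec_Pi)
  also have "\<dots> = (\<Prod>j\<in>UNIV-{i}. card (A j))"
    by (subst prod.remove[of _ i]) (auto simp: A_def)
  also have "\<dots> = (\<Prod>j\<in>UNIV-{i}. 2*n+1)"
    by (rule prod.cong) (auto simp: A_def nat_add_distrib)
  also have "\<dots> = (2*n+1) ^ (CARD('d) - 1)"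
    by (simp add: card_Diff_singleton)
  finally show ?thesis .
qed

lemma card_shell_le: "card (shell n :: (int^'d::finite) set) \<le> 2 * CARD('d) * (2*n+1) ^ (CARD('d) - 1)"
proof -
  let ?face = "\<lambda>i c. {m::int^'d. m \<in> box n \<and> m$i = c}"
  let ?U = "\<Union>i. ?face i (int n) \<union> ?face i (- int n)"
  have "shell n \<subseteq> ?U"
  proof
    fix m :: "int^'d" assume "m \<in> shell n"
    then have "m \<in> box n" and "maxnorm m = n" by (simp_all add: shell_def mem_box_iff)
    moreover obtain i where "\<bar>m$i\<bar> = int (maxnorm m)" using maxnorm_attained by blast
    ultimately have "m$i = int n \<or> m$i = - int n" by arith
    with \<open>m \<in> box n\<close> have "m \<in> ?face i (int n) \<union> ?face i (- int n)" by blast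
    then show "m \<in> ?U" by blast
  qed
  moreover have "finite ?U"
    by (rule finite_subset[OF _ finite_box[of n]]) blast
  ultimately have "card (shell n :: (int^'d) set) \<le> card ?U"
    by (rule card_mono[rotated])
  also have "\<dots> \<le> (\<Sum>i\<in>UNIV. card (?face i (int n) \<union> ?face i (- int n)))"
    by (rule card_UN_le) simp
  also have "\<dots> \<le> (\<Sum>i\<in>(UNIV::'d set). 2 * (2*n+1) ^ (CARD('d) - 1))"
  proof (rule sum_mono)
    fix i :: 'd
    show "card (?face i (int n) \<union> ?face i (- int n)) \<le> 2 * (2*n+1) ^ (CARD('d) - 1)"
      using card_Un_le[of "?face i (int n)" "?face i (- int n)"]
        card_box_face[of n i "int n"] card_box_face[of n i "- int n"] by linarith
  qed
  also have "\<dots> = 2 * CARD('d) * (2*n+1) ^ (CARD('d) - 1)"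
    by (simp only: sum_constant of_nat_id ac_simps)
  finally show ?thesis .
qed

lemma card_shell_mult_le:
  assumes "r \<le> 2 * m"
  shows "card (shell r :: (int^'d::finite) set) * (2 * real m + 1)
    \<le> CARD('d) * 2 ^ CARD('d) * card (box m :: (int^'d) set)"
proof -
  define e where "e = CARD('d) - 1"
  have d: "CARD('d) = Suc e" by (simp add: e_def)
  have "card (shell r :: (int^'d) set) \<le> 2 * Suc e * (2*r+1) ^ e"
    using card_shell_le[of r, where 'd='d] unfolding d by simp
  also have "\<dots> \<le> 2 * Suc e * (2 * (2*m+1)) ^ e"
    using assms by (intro mult_le_mono2 power_mono) auto
  also have "\<dots> = Suc e * 2 ^ Suc e * (2*m+1) ^ e"
    by (simp only: power_mult_distrib power_Suc mult_ac)
  finally have "card (shell r :: (int^'d) set) * (2*m+1) \<le> Suc e * 2 ^ Suc e * (2*m+1) ^ e * (2*m+1)"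
    by (rule mult_le_mono1)
  also have "\<dots> = CARD('d) * 2 ^ CARD('d) * card (box m :: (int^'d) set)"
    by (simp only: card_box d power_Suc mult_ac)
  finally have "real (card (shell r :: (int^'d) set) * (2*m+1))
      \<le> real (CARD('d) * 2 ^ CARD('d) * card (box m :: (int^'d) set))"
    by (simp only: of_nat_le_iff)
  then show ?thesis by (simp add: algebra_simps)
qed

section \<open>Shifts, invariant measures and periodic orbits\<close>

lemma compact_UNIV_configurations:
  "compact (UNIV :: (int^'d::finite \<Rightarrow> 'a::{finite,discrete_topology}) set)"
proof -
  have "compact_space (product_topology (\<lambda>i::int^'d. (euclidean :: 'a topology)) UNIV)"
    unfolding compact_space_product_topology
    by (auto simp: compact_space_def intro!: finite_imp_compact)
  then show ?thesis
    by (simp add: euclidean_product_topology compact_space_def)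
qed

lemma shift_shift: "shift n (shift k y) = shift (k + n) y"
  unfolding shift_def by (simp add: algebra_simps)

lemma continuous_on_shift: "continuous_on UNIV (shift k :: (int^'d::finite \<Rightarrow> 'a::topological_space) \<Rightarrow> _)"
  unfolding shift_def
  by (intro continuous_on_coordinatewise_then_product continuous_on_product_coordinates)

lemma shift_measurable: "(shift k :: (int^'d::finite \<Rightarrow> 'a::topological_space) \<Rightarrow> _) \<in> borel_measurable borel"
  by (rule borel_measurable_continuous_onI[OF continuous_on_shift])

lemma cylinder_in_borel:
  fixes w :: "int^'d::finite \<Rightarrow> 'a::discrete_topology"
  assumes "finite \<Lambda>"
  shows "cylinder \<Lambda> w \<in> sets borel"
proof -
  have "open {x::int^'d \<Rightarrow> 'a. \<forall>m\<in>\<Lambda>. x (id m) \<in> {w m}}"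
    by (rule product_topology_basis'[OF assms]) (rule discrete_topology_class.open_discrete)
  then show ?thesis by (simp add: cylinder_def)
qed

lemma inv_measuresD:
  assumes "M \<in> inv_measures"
  shows "sets M = sets borel" "prob_space M" "space M = UNIV"
    "\<And>A n. A \<in> sets M \<Longrightarrow> emeasure M (shift n -` A) = emeasure M A"
  using assms unfolding inv_measures_def by (auto dest: sets_eq_imp_space_eq)

lemma measurable_inv_measure:
  "M \<in> inv_measures \<Longrightarrow> f \<in> measurable borel N \<Longrightarrow> f \<in> measurable M N"
  using measurable_cong_sets[OF inv_measuresD(1) refl] by blast

lemma integrable_inv_measure:
  assumes "M \<in> inv_measures" "f \<in> borel_measurable borel" "\<And>x. \<bar>f x\<bar> \<le> C"
  shows "integrable M (f :: _ \<Rightarrow> real)"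
proof -
  interpret prob_space M using inv_measuresD(2)[OF assms(1)] .
  show ?thesis
    using assms measurable_inv_measure[OF assms(1,2)] by (intro integrable_const_bound[where B=C]) auto
qed

lemma integral_shift_inv_measure:
  assumes "M \<in> inv_measures" "f \<in> borel_measurable borel"
  shows "integral\<^sup>L M (\<lambda>x. f (shift k x)) = integral\<^sup>L M (f :: _ \<Rightarrow> real)"
proof -
  have shift_M: "shift k \<in> measurable M M"
    using measurable_inv_measure[OF assms(1) shift_measurable]
    by (simp add: measurable_cong_sets[OF refl inv_measuresD(1)[OF assms(1)]])
  have "distr M M (shift k) = M"
  proof (rule measure_eqI)
    fix A assume "A \<in> sets (distr M M (shift k))"
    then show "emeasure (distr M M (shift k)) A = emeasure M A"
      using emeasure_distr[OF shift_M] inv_measuresD(3,4)[OF assms(1)] by simp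
  qed simp
  then show ?thesis
    using integral_distr[OF shift_M measurable_inv_measure[OF assms]] by simp
qed

lemma (in prob_space) exists_ge_integral:
  assumes "integrable M f"
  shows "\<exists>x\<in>space M. integral\<^sup>L M f \<le> (f x :: real)"
proof (rule ccontr)
  assume "\<not> ?thesis"
  then have "AE x in M. f x < integral\<^sup>L M f" by (auto simp: not_le)
  then have "integral\<^sup>L M f < integral\<^sup>L M (\<lambda>_. integral\<^sup>L M f)"
    by (intro integral_less_AE_space assms) (auto simp: emeasure_space_1)
  then show False by (simp add: prob_space)
qed

lemma (in prob_space) exists_le_integral:
  assumes "integrable M f"
  shows "\<exists>x\<in>space M. (f x :: real) \<le> integral\<^sup>L M f"
  using exists_ge_integral[OF integrable_minus[OF assms]] by auto

definition box_mod :: "nat \<Rightarrow> int^'d::finite \<Rightarrow> int^'d" where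
  "box_mod L k = (\<chi> i. (k$i + int L) mod (2 * int L + 1) - int L)"

definition periodize :: "nat \<Rightarrow> (int^'d::finite \<Rightarrow> 'a) \<Rightarrow> (int^'d \<Rightarrow> 'a)" where
  "periodize L x = (\<lambda>m. x (box_mod L m))"

lemma box_mod_in_box: "box_mod L k \<in> box L"
  unfolding box_def mem_Collect_eq
proof
  fix i
  have "0 \<le> (k$i + int L) mod (2 * int L + 1)" by (rule pos_mod_sign) simp
  moreover have "(k$i + int L) mod (2 * int L + 1) < 2 * int L + 1" by (rule pos_mod_bound) simp
  ultimately show "\<bar>box_mod L k $ i\<bar> \<le> int L"
    unfolding box_mod_def by (simp add: abs_le_iff)
qed

lemma box_mod_eq_self: "k \<in> box L \<Longrightarrow> box_mod L k = k"
proof -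
  assume "k \<in> box L"
  then have bound: "\<bar>k$i\<bar> \<le> int L" for i by (simp add: box_def)
  have "(k$i + int L) mod (2 * int L + 1) = k$i + int L" for i
    using bound[of i] by (intro mod_pos_pos_trivial) linarith+
  then show ?thesis unfolding box_mod_def by (simp add: vec_eq_iff)
qed

lemma box_mod_add_left: "box_mod L (box_mod L a + b) = box_mod L (a + b)"
proof -
  have "((a$i + int L) mod (2 * int L + 1) - int L + b$i + int L) mod (2 * int L + 1)
      = (a$i + b$i + int L) mod (2 * int L + 1)" for i
  proof -
    have "((a$i + int L) mod (2 * int L + 1) + b$i) mod (2 * int L + 1)
        = (a$i + int L + b$i) mod (2 * int L + 1)"
      by (rule mod_add_left_eq)
    then show ?thesis by (simp add: ac_simps)
  qed
  then show ?thesis unfolding box_mod_def by (simp add: vec_eq_iff)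
qed

lemma shift_periodize: "shift k (periodize L x) = shift (box_mod L k) (periodize L x)"
  by (simp add: shift_def periodize_def box_mod_add_left)

lemma inj_on_box_mod_translate: "inj_on (\<lambda>k. box_mod L (k + n)) (box L)"
proof (rule inj_onI)
  fix k k' assume k: "k \<in> box L" and k': "k' \<in> box L"
    and eq: "box_mod L (k + n) = box_mod L (k' + n)"
  have "k$i = k'$i" for i
  proof -
    from eq have "(k$i + n$i + int L) mod (2 * int L + 1) = (k'$i + n$i + int L) mod (2 * int L + 1)"
      unfolding box_mod_def by (auto simp: vec_eq_iff dest!: spec[of _ i])
    then have dvd: "(2 * int L + 1) dvd (k$i - k'$i)"
      by (metis (no_types, opaque_lifting) add_diff_cancel_right mod_eq_dvd_iff diff_diff_eq2 add.commute add_diff_cancel_left)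
    have "\<bar>k$i\<bar> \<le> int L" "\<bar>k'$i\<bar> \<le> int L"
      using k k' by (simp_all add: box_def)
    then have "\<bar>k$i - k'$i\<bar> \<le> 2 * int L" by linarith
    then show ?thesis using dvd_imp_le_int[OF _ dvd] by (cases "k$i - k'$i = 0") auto
  qed
  then show "k = k'" by (simp add: vec_eq_iff)
qed

definition orbit_measure :: "nat \<Rightarrow> (int^'d::finite \<Rightarrow> 'a::topological_space) \<Rightarrow> (int^'d \<Rightarrow> 'a) measure" where
  "orbit_measure L y = distr (measure_pmf (pmf_of_set (box L))) borel (\<lambda>k. shift k y)"

lemma integral_orbit_measure:
  fixes f :: "(int^'d::finite \<Rightarrow> 'a::topological_space) \<Rightarrow> real"
  assumes "f \<in> borel_measurable borel"
  shows "integral\<^sup>L (orbit_measure L y) f = (\<Sum>k\<in>box L. f (shift k y)) / card (box L :: (int^'d) set)"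
  unfolding orbit_measure_def
  by (simp add: integral_distr[OF _ assms] integral_pmf_of_set[OF box_nonempty finite_box])

lemma orbit_measure_periodize_in_inv_measures:
  fixes x :: "int^'d::finite \<Rightarrow> 'a::topological_space"
  shows "orbit_measure L (periodize L x) \<in> inv_measures"
proof -
  define y where "y = periodize L x"
  define P where "P = pmf_of_set (box L :: (int^'d) set)"
  define g where "g n k = box_mod L (k + n)" for n k :: "int^'d"
  have "map_pmf (g n) P = P" for n
  proof -
    have "g n ` box L \<subseteq> box L" by (auto simp: g_def box_mod_in_box)
    moreover have "inj_on (g n) (box L)" unfolding g_def by (rule inj_on_box_mod_translate)
    ultimately have "g n ` box L = box L" by (intro endo_inj_surj) auto
    then show ?thesis
      unfolding P_def using map_pmf_of_set_inj[OF \<open>inj_on (g n) _\<close> box_nonempty finite_box] by simp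
  qed
  then have "emeasure (orbit_measure L y) (shift n -` A) = emeasure (orbit_measure L y) A"
    if "A \<in> sets borel" for n A
  proof -
    have "(\<lambda>k. shift k y) -` shift n -` A = g n -` (\<lambda>k. shift k y) -` A"
      by (auto simp: g_def y_def shift_shift shift_periodize[of "_ + n"])
    then show ?thesis
      using that measurable_sets[OF shift_measurable that, of n] \<open>map_pmf (g n) P = P\<close>
      by (simp add: orbit_measure_def emeasure_distr flip: P_def)
        (metis emeasure_map_pmf)
  qed
  moreover have "prob_space (orbit_measure L y)"
    unfolding orbit_measure_def by (simp add: prob_space.prob_space_distr prob_space_measure_pmf)
  ultimately show ?thesis
    unfolding inv_measures_def y_def by (simp add: orbit_measure_def)
qed

section \<open>Separated sets of centres and patched configurations\<close>

definition paste :: "int^'d::finite \<Rightarrow> nat \<Rightarrow> (int^'d \<Rightarrow> 'a) \<Rightarrow> (int^'d \<Rightarrow> 'a) \<Rightarrow> (int^'d \<Rightarrow> 'a)" where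
  "paste s n v x = (\<lambda>m. if m - s \<in> box n then v (m - s) else x m)"

(* For centres at mutual distance > 2n the boxes s + box n are disjoint and the SOME below is
   unique (patch_insert); patch is only used for such sets. *)
definition patch :: "(int^'d::finite) set \<Rightarrow> nat \<Rightarrow> (int^'d \<Rightarrow> 'a) \<Rightarrow> (int^'d \<Rightarrow> 'a) \<Rightarrow> (int^'d \<Rightarrow> 'a)" where
  "patch G n v x = (\<lambda>m. if \<exists>s\<in>G. m - s \<in> box n then v (m - (SOME s. s \<in> G \<and> m - s \<in> box n)) else x m)"

lemma patch_empty [simp]: "patch {} n v x = x"
  by (simp add: patch_def)

lemma patch_insert:
  assumes far: "\<forall>t\<in>G. 2 * n < maxnorm (s - t)"
  shows "patch (insert s G) n v x = paste s n v (patch G n v x)"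
proof
  fix m
  have unique: "t = s" if "t \<in> insert s G" "m - t \<in> box n" "m - s \<in> box n" for t
  proof (rule ccontr)
    assume "t \<noteq> s"
    then have "2 * n < maxnorm (s - t)" using far that(1) by auto
    moreover have "maxnorm (s - t) \<le> maxnorm (s - m) + maxnorm (m - t)"
      by (rule maxnorm_diff_triangle)
    ultimately show False
      using that(2,3) by (simp add: mem_box_iff maxnorm_minus_commute[of s m])
  qed
  show "patch (insert s G) n v x m = paste s n v (patch G n v x) m"
  proof (cases "m - s \<in> box n")
    case True
    then have "(SOME t. t \<in> insert s G \<and> m - t \<in> box n) = s"
      using unique by (intro some_equality) auto
    then show ?thesis using True by (simp add: patch_def paste_def)
  next
    case False
    then have "(\<lambda>t. t \<in> insert s G \<and> m - t \<in> box n) = (\<lambda>t. t \<in> G \<and> m - t \<in> box n)"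
      by auto
    then show ?thesis using False by (simp add: patch_def paste_def)
  qed
qed

lemma card_le_card_diff_translate_box:
  fixes S :: "(int^'d::finite) set"
  assumes "finite S"
  shows "card S \<le> card (S - (+) s ` box r) + card (box r :: (int^'d) set)"
proof -
  have "card S \<le> card ((S - (+) s ` box r) \<union> (+) s ` box r)"
    using assms by (intro card_mono) auto
  also have "\<dots> \<le> card (S - (+) s ` box r) + card ((+) s ` box r)"
    by (rule card_Un_le)
  finally show ?thesis by (simp add: card_image)
qed

lemma exists_separated_subset:
  fixes S :: "(int^'d::finite) set"
  assumes "finite S"
  shows "\<exists>G\<subseteq>S. card S \<le> card (box (2 * n) :: (int^'d) set) * card G
           \<and> pairwise (\<lambda>s t. 2 * n < maxnorm (s - t)) G"
  using assms
proof (induction "card S" arbitrary: S rule: less_induct)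
  case less
  define K where "K = card (box (2 * n) :: (int^'d) set)"
  show ?case
  proof (cases "S = {}")
    case False
    then obtain s where s: "s \<in> S" by blast
    define S' where "S' = S - (+) s ` box (2 * n)"
    have "s \<notin> S'" by (simp add: S'_def mem_translate_box_iff)
    then have "S' \<subset> S" using s unfolding S'_def by blast
    then have "card S' < card S" by (rule psubset_card_mono[OF less.prems])
    moreover have "finite S'" using less.prems by (simp add: S'_def)
    ultimately obtain G where G: "G \<subseteq> S'" "card S' \<le> K * card G"
      "pairwise (\<lambda>s t. 2 * n < maxnorm (s - t)) G"
      using less.hyps unfolding K_def by blast
    have "card S \<le> K * card G + K"
      using card_le_card_diff_translate_box[OF less.prems, of s "2 * n"] G(2)
      unfolding K_def S'_def by linarith
    also have "\<dots> = K * card (insert s G)"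
      using finite_subset[OF G(1) \<open>finite S'\<close>] \<open>s \<notin> S'\<close> G(1) by (subst card_insert_disjoint) auto
    finally have "card S \<le> K * card (insert s G)" .
    moreover have "pairwise (\<lambda>s t. 2 * n < maxnorm (s - t)) (insert s G)"
    proof -
      have "2 * n < maxnorm (t - s)" if "t \<in> G" for t
        using that G(1) by (auto simp: S'_def mem_translate_box_iff mem_box_iff)
      then show ?thesis
        using G(3) by (auto simp: pairwise_insert maxnorm_minus_commute[of s])
    qed
    ultimately show ?thesis
      using G(1) s unfolding K_def by (intro exI[of _ "insert s G"]) (auto simp: S'_def)
  qed simp
qed

section \<open>Variation bounds\<close>

locale regular_potential =
  fixes \<phi> :: "(int^'d::finite \<Rightarrow> 'a::{finite,discrete_topology}) \<Rightarrow> real"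
  assumes continuous: "continuous_on UNIV \<phi>"
    and summable_var: "summable (\<lambda>n. real n ^ (CARD('d) - 1) * var n \<phi>)"
begin

lemma potential_measurable [measurable]: "\<phi> \<in> borel_measurable borel"
  by (rule borel_measurable_continuous_onI[OF continuous])

lemma potential_bounded: "\<exists>B. \<forall>x. \<bar>\<phi> x\<bar> \<le> B"
proof -
  have "bounded (range \<phi>)"
    using compact_continuous_image[OF continuous compact_UNIV_configurations]
    by (simp add: compact_imp_bounded)
  then show ?thesis by (auto simp: bounded_iff)
qed

lemma abs_diff_le_var:
  assumes "\<And>m. m \<in> box r \<Longrightarrow> x m = y m"
  shows "\<bar>\<phi> x - \<phi> y\<bar> \<le> var r \<phi>"
proof -
  obtain B where B: "\<And>x. \<bar>\<phi> x\<bar> \<le> B" using potential_bounded by blast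
  have "\<bar>\<phi> x' - \<phi> y'\<bar> \<le> 2 * B" for x' y'
    using B[of x'] B[of y'] by linarith
  then have "bdd_above ((\<lambda>(x, y). \<bar>\<phi> x - \<phi> y\<bar>) ` {(x, y). \<forall>m \<in> box r. x m = y m})"
    by (auto intro!: bdd_aboveI[of _ "2 * B"])
  moreover have "(x, y) \<in> {(x, y). \<forall>m \<in> box r. x m = y m}" using assms by auto
  ultimately show ?thesis unfolding var_def
    by (metis (no_types, lifting) cSUP_upper case_prod_conv)
qed

lemma var_nonneg: "0 \<le> var r \<phi>"
  using abs_diff_le_var[of r undefined undefined] by simp

lemma abs_diff_shift_le_var:
  assumes "\<And>m. m \<in> box r \<Longrightarrow> x (k + m) = y (k' + m)"
  shows "\<bar>\<phi> (shift k x) - \<phi> (shift k' y)\<bar> \<le> var r \<phi>"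
  by (rule abs_diff_le_var) (simp add: shift_def assms)

(* A bound for the sum of var_|u| over all u in Z^d: shell r has at most
   2d (2r+1)^(d-1) <= 2d 3^(d-1) r^(d-1) elements for r >= 1. *)
definition var_total :: real where
  "var_total = 2 * CARD('d) * var 0 \<phi>
     + 2 * CARD('d) * 3 ^ (CARD('d) - 1) * (\<Sum>n. real n ^ (CARD('d) - 1) * var n \<phi>)"

lemma card_shell_mult_var_le:
  "real (card (shell r :: (int^'d) set)) * var r \<phi>
     \<le> 2 * CARD('d) * 3 ^ (CARD('d) - 1) * (real r ^ (CARD('d) - 1) * var r \<phi>)
       + (if r = 0 then 2 * CARD('d) * var 0 \<phi> else 0)"
proof (cases "r = 0")
  case True
  have "real (card (shell 0 :: (int^'d) set)) \<le> 2 * CARD('d)"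
    using card_shell_le[of 0, where 'd='d] by (simp add: of_nat_le_iff[symmetric])
  then have "real (card (shell 0 :: (int^'d) set)) * var 0 \<phi> \<le> 2 * CARD('d) * var 0 \<phi>"
    using var_nonneg[of 0] by (rule mult_right_mono)
  moreover have "0 \<le> 2 * CARD('d) * 3 ^ (CARD('d) - 1) * (real 0 ^ (CARD('d) - 1) * var 0 \<phi>)"
    using var_nonneg[of 0] by simp
  ultimately show ?thesis
    unfolding True by (simp only: simp_thms if_True)
next
  case False
  have "real (card (shell r :: (int^'d) set)) \<le> real (2 * CARD('d) * (2 * r + 1) ^ (CARD('d) - 1))"
    using card_shell_le[of r, where 'd='d] by (simp only: of_nat_le_iff)
  also have "\<dots> = 2 * CARD('d) * (2 * real r + 1) ^ (CARD('d) - 1)"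
    by (simp add: add.commute)
  also have "\<dots> \<le> 2 * CARD('d) * (3 * real r) ^ (CARD('d) - 1)"
    using False by (intro mult_left_mono power_mono) auto
  also have "\<dots> = 2 * CARD('d) * 3 ^ (CARD('d) - 1) * real r ^ (CARD('d) - 1)"
    by (simp add: power_mult_distrib)
  finally have "real (card (shell r :: (int^'d) set)) * var r \<phi>
      \<le> 2 * CARD('d) * 3 ^ (CARD('d) - 1) * real r ^ (CARD('d) - 1) * var r \<phi>"
    using var_nonneg by (rule mult_right_mono)
  then show ?thesis using False by (simp add: mult.assoc)
qed

lemma sum_var_maxnorm_le:
  fixes F :: "(int^'d) set"
  assumes "finite F"
  shows "(\<Sum>u\<in>F. var (maxnorm u) \<phi>) \<le> var_total"
proof -
  define R where "R = Max (insert 0 (maxnorm ` F))"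
  have "F \<subseteq> box R" using assms by (auto simp: R_def mem_box_iff)
  then have "(\<Sum>u\<in>F. var (maxnorm u) \<phi>) \<le> (\<Sum>u\<in>(box R :: (int^'d) set). var (maxnorm u) \<phi>)"
    by (intro sum_mono2[OF finite_box]) (auto simp: var_nonneg)
  also have "\<dots> = (\<Sum>r\<le>R. \<Sum>u\<in>{u\<in>(box R :: (int^'d) set). maxnorm u = r}. var (maxnorm u) \<phi>)"
    by (rule sum.group[symmetric]) (auto simp: mem_box_iff)
  also have "\<dots> = (\<Sum>r\<le>R. real (card (shell r :: (int^'d) set)) * var r \<phi>)"
  proof (rule sum.cong)
    fix r assume "r \<in> {..R}"
    then have "{u\<in>(box R :: (int^'d) set). maxnorm u = r} = shell r" by (auto simp: shell_def mem_box_iff)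
    then show "(\<Sum>u\<in>{u\<in>(box R :: (int^'d) set). maxnorm u = r}. var (maxnorm u) \<phi>) = real (card (shell r :: (int^'d) set)) * var r \<phi>"
      by (simp add: shell_def)
  qed simp
  also have "\<dots> \<le> (\<Sum>r\<le>R. 2 * CARD('d) * 3 ^ (CARD('d) - 1) * (real r ^ (CARD('d) - 1) * var r \<phi>)
                         + (if r = 0 then 2 * CARD('d) * var 0 \<phi> else 0))"
    by (rule sum_mono) (rule card_shell_mult_var_le)
  also have "\<dots> = 2 * CARD('d) * 3 ^ (CARD('d) - 1) * (\<Sum>r\<le>R. real r ^ (CARD('d) - 1) * var r \<phi>)
                  + 2 * CARD('d) * var 0 \<phi>"
    by (simp add: sum.distrib sum_distrib_left)
  also have "\<dots> \<le> var_total"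
    unfolding var_total_def
    using sum_le_suminf[OF summable_var, of "{..R}"] by (simp add: var_nonneg)
  finally show ?thesis .
qed

lemma var_total_nonneg: "0 \<le> var_total"
  using sum_var_maxnorm_le[of "{} :: (int^'d) set"] by simp

lemma sum_var_retract_le:
  fixes F T :: "(int^'d) set"
  assumes "finite F" "finite T" "b ` F \<subseteq> T"
  shows "(\<Sum>k\<in>F. var (maxnorm (k - b k)) \<phi>) \<le> card T * var_total"
proof -
  have "(\<Sum>k\<in>F. var (maxnorm (k - b k)) \<phi>) = (\<Sum>t\<in>T. \<Sum>k\<in>{k\<in>F. b k = t}. var (maxnorm (k - t)) \<phi>)"
    by (subst sum.group[symmetric, OF assms]) (auto intro!: sum.cong)
  also have "\<dots> \<le> (\<Sum>t\<in>T. var_total)"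
  proof (rule sum_mono)
    fix t
    have "(\<Sum>k\<in>{k\<in>F. b k = t}. var (maxnorm (k - t)) \<phi>) = (\<Sum>u\<in>(\<lambda>k. k - t) ` {k\<in>F. b k = t}. var (maxnorm u) \<phi>)"
      by (subst sum.reindex) (auto simp: inj_on_def)
    also have "\<dots> \<le> var_total" by (rule sum_var_maxnorm_le) (use assms in auto)
    finally show "(\<Sum>k\<in>{k\<in>F. b k = t}. var (maxnorm (k - t)) \<phi>) \<le> var_total" .
  qed
  finally show ?thesis by simp
qed

lemma sum_var_box_le:
  "(\<Sum>k\<in>(box n :: (int^'d) set). var (n - maxnorm k) \<phi>) \<le> card (shell n :: (int^'d) set) * var_total"
proof -
  define I where "I k = (SOME i. \<bar>k$i\<bar> = int (maxnorm k))" for k :: "int^'d"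
  have I: "\<bar>k$(I k)\<bar> = int (maxnorm k)" for k
    unfolding I_def by (rule someI_ex) (rule maxnorm_attained)
  define b where "b k = (\<chi> j. if j = I k then (if k$j \<ge> 0 then int n else - int n) else k$j)" for k
  have b_shell: "b k \<in> shell n" and b_dist: "maxnorm (k - b k) = n - maxnorm k" if "k \<in> box n" for k
  proof -
    have k: "\<bar>k$i\<bar> \<le> int n" for i using that by (simp add: box_def)
    have M: "int (n - maxnorm k) = int n - int (maxnorm k)" using that by (simp add: mem_box_iff)
    have "\<bar>b k $ i\<bar> \<le> int n" for i
      using k[of i] by (cases "i = I k") (simp_all add: b_def)
    moreover have "\<bar>b k $ I k\<bar> = int n"
      by (simp add: b_def)
    ultimately show "b k \<in> shell n"
      unfolding shell_def by (blast intro: maxnorm_eqI)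
    have at_I: "\<bar>(k - b k) $ I k\<bar> = int (n - maxnorm k)"
      using k[of "I k"] I[of k] unfolding M by (simp add: b_def) arith
    then have "\<bar>(k - b k) $ i\<bar> \<le> int (n - maxnorm k)" for i
      by (cases "i = I k") (simp_all add: b_def)
    with at_I show "maxnorm (k - b k) = n - maxnorm k"
      by (blast intro: maxnorm_eqI)
  qed
  have "(\<Sum>k\<in>(box n :: (int^'d) set). var (n - maxnorm k) \<phi>) = (\<Sum>k\<in>box n. var (maxnorm (k - b k)) \<phi>)"
    by (rule sum.cong) (simp_all add: b_dist)
  also have "\<dots> \<le> card (shell n :: (int^'d) set) * var_total"
    using b_shell by (intro sum_var_retract_le) auto
  finally show ?thesis .
qed

lemma sum_var_outside_box_le:
  fixes F :: "(int^'d) set"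
  assumes "finite F" "F \<inter> box n = {}"
  shows "(\<Sum>k\<in>F. var (maxnorm k - n - 1) \<phi>) \<le> card (shell (n + 1) :: (int^'d) set) * var_total"
proof -
  define b where "b k = (\<chi> j. max (- int (n + 1)) (min (int (n + 1)) (k$j)))" for k :: "int^'d"
  have "b k \<in> shell (n + 1)" and "maxnorm (k - b k) = maxnorm k - n - 1" if "k \<in> F" for k
  proof -
    have far: "n < maxnorm k" using that assms(2) by (auto simp: mem_box_iff)
    obtain j where j: "\<bar>k$j\<bar> = int (maxnorm k)" using maxnorm_attained by blast
    have k: "\<bar>k$i\<bar> \<le> int (maxnorm k)" for i by (rule abs_le_maxnorm)
    show "b k \<in> shell (n + 1)" unfolding shell_def
    proof (intro CollectI maxnorm_eqI[where j=j])
      show "\<bar>b k $ i\<bar> \<le> int (n + 1)" for i by (simp add: b_def)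
      show "\<bar>b k $ j\<bar> = int (n + 1)" using far j by (simp add: b_def)
    qed
    show "maxnorm (k - b k) = maxnorm k - n - 1"
    proof (intro maxnorm_eqI[where j=j])
      show "\<bar>(k - b k) $ i\<bar> \<le> int (maxnorm k - n - 1)" for i
        using far k[of i] by (simp add: b_def)
      show "\<bar>(k - b k) $ j\<bar> = int (maxnorm k - n - 1)"
        using far j by (simp add: b_def)
    qed
  qed
  then show ?thesis
    using sum_var_retract_le[OF assms(1) finite_shell, of b] by (simp add: image_subset_iff)
qed

section \<open>Birkhoff sums\<close>

definition birkhoff_sum :: "(int^'d) set \<Rightarrow> (int^'d \<Rightarrow> 'a) \<Rightarrow> real" where
  "birkhoff_sum F x = (\<Sum>k\<in>F. \<phi> (shift k x))"

lemma integrable_shift: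
  assumes "M \<in> inv_measures"
  shows "integrable M (\<lambda>x. \<phi> (shift k x))"
proof -
  obtain B where "\<And>x. \<bar>\<phi> x\<bar> \<le> B" using potential_bounded by blast
  then show ?thesis
    using measurable_compose[OF shift_measurable potential_measurable]
    by (intro integrable_inv_measure[OF assms]) (auto simp: comp_def)
qed

lemma integrable_birkhoff_sum: "M \<in> inv_measures \<Longrightarrow> integrable M (birkhoff_sum F)"
  unfolding birkhoff_sum_def by (intro Bochner_Integration.integrable_sum integrable_shift)

lemma integral_birkhoff_sum:
  assumes "M \<in> inv_measures"
  shows "integral\<^sup>L M (birkhoff_sum F) = card F * integral\<^sup>L M \<phi>"
proof (cases "finite F")
  case True
  have "integral\<^sup>L M (birkhoff_sum F) = (\<Sum>k\<in>F. integral\<^sup>L M (\<lambda>x. \<phi> (shift k x)))"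
    unfolding birkhoff_sum_def by (rule Bochner_Integration.integral_sum[OF integrable_shift[OF assms]])
  also have "\<dots> = (\<Sum>k\<in>F. integral\<^sup>L M \<phi>)"
    by (simp add: integral_shift_inv_measure[OF assms potential_measurable])
  finally show ?thesis by simp
qed (simp add: birkhoff_sum_def[abs_def])

definition max_integral :: real where
  "max_integral = (SUP \<nu>\<in>inv_measures. integral\<^sup>L \<nu> \<phi>)"

lemma integral_le_max_integral:
  assumes "M \<in> inv_measures"
  shows "integral\<^sup>L M \<phi> \<le> max_integral"
proof -
  obtain B where B: "\<And>x. \<bar>\<phi> x\<bar> \<le> B" using potential_bounded by blast
  have "integral\<^sup>L N \<phi> \<le> B" if "N \<in> inv_measures" for N
  proof -
    interpret prob_space N using inv_measuresD(2)[OF that] .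
    have "integral\<^sup>L N \<phi> \<le> integral\<^sup>L N (\<lambda>_. B)"
      using B integrable_inv_measure[OF that potential_measurable B]
      by (intro integral_mono) (auto simp: abs_le_iff)
    then show ?thesis by (simp add: prob_space)
  qed
  then have "bdd_above ((\<lambda>\<nu>. integral\<^sup>L \<nu> \<phi>) ` inv_measures)"
    by (auto intro!: bdd_aboveI[of _ B])
  then show ?thesis
    unfolding max_integral_def using assms by (rule cSUP_upper2) simp
qed

lemma birkhoff_sum_periodize_le:
  "birkhoff_sum (box L) (periodize L x) \<le> card (box L :: (int^'d) set) * max_integral"
proof -
  have "birkhoff_sum (box L) (periodize L x) / card (box L :: (int^'d) set) \<le> max_integral"
    using integral_le_max_integral[OF orbit_measure_periodize_in_inv_measures[of L x]]
    by (simp add: integral_orbit_measure birkhoff_sum_def)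
  moreover have "0 < card (box L :: (int^'d) set)" by (simp add: card_box)
  ultimately show ?thesis by (simp add: divide_le_eq mult.commute)
qed

lemma birkhoff_sum_periodize_ge:
  "birkhoff_sum (box L) x - card (shell L :: (int^'d) set) * var_total \<le> birkhoff_sum (box L) (periodize L x)"
proof -
  have "\<phi> (shift k x) - \<phi> (shift k (periodize L x)) \<le> var (L - maxnorm k) \<phi>" if "k \<in> box L" for k
  proof -
    have "\<bar>\<phi> (shift k x) - \<phi> (shift k (periodize L x))\<bar> \<le> var (L - maxnorm k) \<phi>"
    proof (rule abs_diff_shift_le_var)
      fix m :: "int^'d" assume "m \<in> box (L - maxnorm k)"
      then have "k + m \<in> box L"
        using that maxnorm_add_le[of k m] by (simp add: mem_box_iff)
      then show "x (k + m) = periodize L x (k + m)" by (simp add: periodize_def box_mod_eq_self)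
    qed
    then show ?thesis by linarith
  qed
  then have "birkhoff_sum (box L) x - birkhoff_sum (box L) (periodize L x) \<le> (\<Sum>k\<in>(box L :: (int^'d) set). var (L - maxnorm k) \<phi>)"
    unfolding birkhoff_sum_def sum_subtractf[symmetric] by (rule sum_mono)
  with sum_var_box_le[of L] show ?thesis by linarith
qed


section \<open>Pasting patterns\<close>

(* The boundary error of one paste: variations inside the pasted box (for the old and the new
   pattern) and just outside it. *)
definition patch_cost :: "nat \<Rightarrow> real" where
  "patch_cost n = (2 * card (shell n :: (int^'d) set) + card (shell (n + 1) :: (int^'d) set)) * var_total"

lemma birkhoff_sum_paste_inside_ge:
  fixes x v w :: "int^'d \<Rightarrow> 'a"
  assumes occ: "\<And>j. j \<in> box n \<Longrightarrow> x (s + j) = w j"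
  shows "birkhoff_sum (box n) v - birkhoff_sum (box n) w - 2 * card (shell n :: (int^'d) set) * var_total
    \<le> birkhoff_sum ((+) s ` box n) (paste s n v x) - birkhoff_sum ((+) s ` box n) x"
proof -
  have "\<phi> (shift j v) - \<phi> (shift j w) - 2 * var (n - maxnorm j) \<phi>
      \<le> \<phi> (shift (s + j) (paste s n v x)) - \<phi> (shift (s + j) x)" if j: "j \<in> box n" for j
  proof -
    have "j + m \<in> box n" if "m \<in> box (n - maxnorm j)" for m
      using j that maxnorm_add_le[of j m] by (simp add: mem_box_iff)
    then have "\<bar>\<phi> (shift (s + j) (paste s n v x)) - \<phi> (shift j v)\<bar> \<le> var (n - maxnorm j) \<phi>"
          and "\<bar>\<phi> (shift (s + j) x) - \<phi> (shift j w)\<bar> \<le> var (n - maxnorm j) \<phi>"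
      by (auto intro!: abs_diff_shift_le_var simp: paste_def occ add.assoc)
    then show ?thesis by linarith
  qed
  then have "(\<Sum>j\<in>(box n :: (int^'d) set). \<phi> (shift j v) - \<phi> (shift j w) - 2 * var (n - maxnorm j) \<phi>)
      \<le> (\<Sum>j\<in>box n. \<phi> (shift (s + j) (paste s n v x)) - \<phi> (shift (s + j) x))"
    by (rule sum_mono)
  then have "birkhoff_sum (box n) v - birkhoff_sum (box n) w - 2 * (\<Sum>j\<in>(box n :: (int^'d) set). var (n - maxnorm j) \<phi>)
      \<le> birkhoff_sum ((+) s ` box n) (paste s n v x) - birkhoff_sum ((+) s ` box n) x"
    by (simp add: birkhoff_sum_def sum.reindex inj_on_def sum_subtractf sum_distrib_left)
  with sum_var_box_le[of n] show ?thesis by linarith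
qed

lemma birkhoff_sum_paste_outside_ge:
  fixes x v :: "int^'d \<Rightarrow> 'a"
  assumes "finite F" "F \<inter> (+) s ` box n = {}"
  shows "- (card (shell (n + 1) :: (int^'d) set) * var_total)
    \<le> birkhoff_sum F (paste s n v x) - birkhoff_sum F x"
proof -
  have far: "n < maxnorm (k - s)" if "k \<in> F" for k
    using that assms(2) by (auto simp: mem_translate_box_iff mem_box_iff)
  have "- var (maxnorm (k - s) - n - 1) \<phi> \<le> \<phi> (shift k (paste s n v x)) - \<phi> (shift k x)" if "k \<in> F" for k
  proof -
    have "k + m - s \<notin> box n" if "m \<in> box (maxnorm (k - s) - n - 1)" for m
    proof
      assume "k + m - s \<in> box n"
      moreover have "maxnorm (k - s) \<le> maxnorm (k + m - s) + maxnorm (- m)"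
        using maxnorm_add_le[of "k + m - s" "- m"] by (simp add: algebra_simps)
      ultimately show False
        using that far[OF \<open>k \<in> F\<close>] unfolding mem_box_iff maxnorm_uminus by arith
    qed
    then have "\<bar>\<phi> (shift k (paste s n v x)) - \<phi> (shift k x)\<bar> \<le> var (maxnorm (k - s) - n - 1) \<phi>"
      by (intro abs_diff_shift_le_var) (auto simp: paste_def algebra_simps)
    then show ?thesis by linarith
  qed
  then have "- (\<Sum>k\<in>F. var (maxnorm (k - s) - n - 1) \<phi>) \<le> birkhoff_sum F (paste s n v x) - birkhoff_sum F x"
    unfolding birkhoff_sum_def sum_subtractf[symmetric] sum_negf[symmetric] by (rule sum_mono)
  moreover have "(\<Sum>k\<in>F. var (maxnorm (k - s) - n - 1) \<phi>)
      = (\<Sum>u\<in>(\<lambda>k. k - s) ` F. var (maxnorm u - n - 1) \<phi>)"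
    by (subst sum.reindex) (auto simp: inj_on_def)
  moreover have "(\<Sum>u\<in>(\<lambda>k. k - s) ` F. var (maxnorm u - n - 1) \<phi>)
      \<le> card (shell (n + 1) :: (int^'d) set) * var_total"
    using assms by (intro sum_var_outside_box_le) (auto simp: mem_translate_box_iff)
  ultimately show ?thesis by linarith
qed

lemma birkhoff_sum_paste_ge:
  fixes x v w :: "int^'d \<Rightarrow> 'a"
  assumes occ: "\<And>j. j \<in> box n \<Longrightarrow> x (s + j) = w j"
    and inside: "maxnorm s + n \<le> L"
  shows "birkhoff_sum (box L) x + (birkhoff_sum (box n) v - birkhoff_sum (box n) w - patch_cost n)
     \<le> birkhoff_sum (box L) (paste s n v x)"
proof -
  let ?A = "(+) s ` box n :: (int^'d) set"
  have "?A \<subseteq> box L"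
  proof
    fix k assume "k \<in> ?A"
    then obtain j where "j \<in> box n" "k = s + j" by blast
    then show "k \<in> box L"
      using inside maxnorm_add_le[of s j] by (simp add: mem_box_iff)
  qed
  then have split: "birkhoff_sum (box L) y = birkhoff_sum ?A y + birkhoff_sum (box L - ?A) y" for y
    unfolding birkhoff_sum_def by (simp add: sum.subset_diff)
  have "- (card (shell (n + 1) :: (int^'d) set) * var_total)
      \<le> birkhoff_sum (box L - ?A) (paste s n v x) - birkhoff_sum (box L - ?A) x"
    by (rule birkhoff_sum_paste_outside_ge) auto
  with birkhoff_sum_paste_inside_ge[where x=x and s=s and n=n and v=v and w=w, OF occ] show ?thesis
    unfolding split[of x] split[of "paste s n v x"] patch_cost_def by (simp add: algebra_simps)
qed

lemma birkhoff_sum_patch_ge: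
  fixes x v w :: "int^'d \<Rightarrow> 'a"
  assumes "finite G" "pairwise (\<lambda>s t. 2 * n < maxnorm (s - t)) G"
    and "\<And>s. s \<in> G \<Longrightarrow> maxnorm s + n \<le> L"
    and "\<And>s j. s \<in> G \<Longrightarrow> j \<in> box n \<Longrightarrow> x (s + j) = w j"
  shows "birkhoff_sum (box L) x + card G * (birkhoff_sum (box n) v - birkhoff_sum (box n) w - patch_cost n)
     \<le> birkhoff_sum (box L) (patch G n v x)"
  using assms
proof (induction G rule: finite_induct)
  case (insert s G)
  have far: "\<forall>t\<in>G. 2 * n < maxnorm (s - t)"
    using insert.prems(1) insert.hyps(2) by (auto simp: pairwise_insert)
  have "patch G n v x (s + j) = w j" if "j \<in> box n" for j
  proof -
    have "s + j - t \<notin> box n" if "t \<in> G" for t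
    proof
      assume "s + j - t \<in> box n"
      moreover have "maxnorm (s - t) \<le> maxnorm (s - (s + j)) + maxnorm (s + j - t)"
        by (rule maxnorm_diff_triangle)
      ultimately show False
        using far that \<open>j \<in> box n\<close> by (fastforce simp: mem_box_iff)
    qed
    then show ?thesis
      using insert.prems(3)[of s j] that by (auto simp: patch_def)
  qed
  then have "birkhoff_sum (box L) (patch G n v x) + (birkhoff_sum (box n) v - birkhoff_sum (box n) w - patch_cost n)
      \<le> birkhoff_sum (box L) (patch (insert s G) n v x)"
    unfolding patch_insert[OF far] using insert.prems(2)[of s] by (intro birkhoff_sum_paste_ge) auto
  moreover have "birkhoff_sum (box L) x + card G * (birkhoff_sum (box n) v - birkhoff_sum (box n) w - patch_cost n)
      \<le> birkhoff_sum (box L) (patch G n v x)"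
    using insert.prems by (intro insert.IH) (auto simp: pairwise_insert)
  ultimately show ?case
    using insert.hyps by (simp add: algebra_simps)
qed simp

section \<open>Maximizing measures miss a cylinder\<close>

lemma birkhoff_sum_plus_occurrences_le:
  fixes x v w :: "int^'d \<Rightarrow> 'a"
  assumes "0 \<le> g" "g \<le> birkhoff_sum (box n) v - birkhoff_sum (box n) w - patch_cost n"
  shows "birkhoff_sum (box (m + n)) x
           + g / card (box (2 * n) :: (int^'d) set) * card {s \<in> box m. shift s x \<in> cylinder (box n) w}
         \<le> card (box (m + n) :: (int^'d) set) * max_integral + card (shell (m + n) :: (int^'d) set) * var_total"
proof -
  define L where "L = m + n"
  define K where "K = card (box (2 * n) :: (int^'d) set)"
  define S where "S = {s \<in> box m. shift s x \<in> cylinder (box n) w}"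
  have "finite S" by (simp add: S_def)
  then obtain G where G: "G \<subseteq> S" "card S \<le> K * card G" "pairwise (\<lambda>s t. 2 * n < maxnorm (s - t)) G"
    unfolding K_def using exists_separated_subset by blast
  have "finite G" using G(1) \<open>finite S\<close> by (rule finite_subset)
  have "g / K * card S \<le> card G * g"
  proof -
    have "0 < K" by (simp add: K_def card_box)
    moreover have "real (card S) \<le> real K * card G" using G(2) by (metis of_nat_le_iff of_nat_mult)
    ultimately show ?thesis using \<open>0 \<le> g\<close> by (simp add: field_simps mult_left_mono)
  qed
  also have "\<dots> \<le> card G * (birkhoff_sum (box n) v - birkhoff_sum (box n) w - patch_cost n)"
    using assms(2) by (intro mult_left_mono) auto
  finally have "birkhoff_sum (box L) x + g / K * card S
      \<le> birkhoff_sum (box L) x + card G * (birkhoff_sum (box n) v - birkhoff_sum (box n) w - patch_cost n)"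
    by simp
  also have "\<dots> \<le> birkhoff_sum (box L) (patch G n v x)"
  proof (rule birkhoff_sum_patch_ge[OF \<open>finite G\<close> G(3)])
    fix s assume "s \<in> G"
    then have "s \<in> S" using G(1) by blast
    then show "maxnorm s + n \<le> L" by (simp add: S_def L_def mem_box_iff)
    show "x (s + j) = w j" if "j \<in> box n" for j
      using \<open>s \<in> S\<close> that by (simp add: S_def cylinder_def shift_def)
  qed
  also have "\<dots> \<le> birkhoff_sum (box L) (periodize L (patch G n v x)) + card (shell L :: (int^'d) set) * var_total"
    using birkhoff_sum_periodize_ge[of L "patch G n v x"] by linarith
  also have "\<dots> \<le> card (box L :: (int^'d) set) * max_integral + card (shell L :: (int^'d) set) * var_total"
    using birkhoff_sum_periodize_le[of L "patch G n v x"] by linarith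
  finally show ?thesis unfolding L_def K_def S_def .
qed

(* Integrating birkhoff_sum_plus_occurrences_le against eta turns the number of occurrences
   into card (box m) times eta(C). *)
lemma measure_cylinder_le:
  fixes v w :: "int^'d \<Rightarrow> 'a"
  assumes "\<eta> \<in> MM \<phi>" "0 \<le> g" "g \<le> birkhoff_sum (box n) v - birkhoff_sum (box n) w - patch_cost n"
  shows "g / card (box (2 * n) :: (int^'d) set) * card (box m :: (int^'d) set) * measure \<eta> (cylinder (box n) w)
         \<le> card (shell (m + n) :: (int^'d) set) * var_total"
proof -
  have inv: "\<eta> \<in> inv_measures" and max: "integral\<^sup>L \<eta> \<phi> = max_integral"
    using assms(1) by (simp_all add: MM_def max_integral_def)
  interpret prob_space \<eta> using inv_measuresD(2)[OF inv] .
  define C where "C = cylinder (box n) w"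
  define \<kappa> where "\<kappa> = g / card (box (2 * n) :: (int^'d) set)"
  define f where "f x = birkhoff_sum (box (m + n)) x + \<kappa> * (\<Sum>s\<in>box m. indicator (shift s -` C) x)" for x
  have C: "C \<in> sets borel" unfolding C_def by (rule cylinder_in_borel) simp
  have shift_C: "shift s -` C \<in> sets borel" for s
    using measurable_sets[OF shift_measurable C] by simp
  have integrable_indicator: "integrable \<eta> (indicator (shift s -` C) :: _ \<Rightarrow> real)" for s
    using shift_C by (intro integrable_inv_measure[OF inv, where C=1]) (auto simp: indicator_def)
  have "measure \<eta> (shift s -` C) = measure \<eta> C" for s
    using inv_measuresD(1,4)[OF inv] shift_C C by (simp add: measure_def)
  then have "integral\<^sup>L \<eta> f
      = card (box (m + n) :: (int^'d) set) * max_integral + \<kappa> * (card (box m :: (int^'d) set) * measure \<eta> C)"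
    unfolding f_def using inv_measuresD(3)[OF inv]
    by (simp add: integrable_birkhoff_sum[OF inv] integrable_indicator integral_birkhoff_sum[OF inv] max)
  moreover have "integral\<^sup>L \<eta> f \<le> integral\<^sup>L \<eta> (\<lambda>_. card (box (m + n) :: (int^'d) set) * max_integral
      + card (shell (m + n) :: (int^'d) set) * var_total)"
  proof (rule integral_mono)
    show "integrable \<eta> f"
      unfolding f_def by (simp add: integrable_birkhoff_sum[OF inv] integrable_indicator)
    fix x
    have "(\<Sum>s\<in>box m. indicator (shift s -` C) x :: real) = card {s \<in> box m. shift s x \<in> C}"
      by (simp add: indicator_def sum.If_cases Int_def)
    then show "f x \<le> card (box (m + n) :: (int^'d) set) * max_integral + card (shell (m + n) :: (int^'d) set) * var_total"
      unfolding f_def \<kappa>_def C_def using birkhoff_sum_plus_occurrences_le[OF assms(2,3)] by simp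
  qed simp
  ultimately show ?thesis unfolding \<kappa>_def C_def by (simp add: prob_space)
qed

lemma measure_cylinder_linear_le:
  fixes v w :: "int^'d \<Rightarrow> 'a"
  assumes "\<eta> \<in> MM \<phi>" "0 \<le> g" "g \<le> birkhoff_sum (box n) v - birkhoff_sum (box n) w - patch_cost n"
    and "n \<le> m"
  shows "g / card (box (2 * n) :: (int^'d) set) * measure \<eta> (cylinder (box n) w) * (2 * real m + 1)
         \<le> CARD('d) * 2 ^ CARD('d) * var_total"
proof -
  let ?a = "g / card (box (2 * n) :: (int^'d) set) * measure \<eta> (cylinder (box n) w)"
  have "?a * (2 * real m + 1) * card (box m :: (int^'d) set)
      \<le> card (shell (m + n) :: (int^'d) set) * (2 * real m + 1) * var_total"
    using mult_right_mono[OF measure_cylinder_le[OF assms(1-3), of m], of "2 * real m + 1"]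
    by (simp add: mult_ac)
  also have "\<dots> \<le> CARD('d) * 2 ^ CARD('d) * card (box m :: (int^'d) set) * var_total"
    using card_shell_mult_le[of "m + n" m, where 'd='d] assms(4) var_total_nonneg
    by (intro mult_right_mono) auto
  finally have "?a * (2 * real m + 1) * card (box m :: (int^'d) set)
      \<le> CARD('d) * 2 ^ CARD('d) * var_total * card (box m :: (int^'d) set)"
    by (simp add: mult_ac)
  then show ?thesis
    by (rule mult_right_le_imp_le) (simp add: card_box)
qed

lemma emeasure_cylinder_eq_0:
  fixes w :: "int^'d \<Rightarrow> 'a"
  assumes "\<eta> \<in> MM \<phi>"
    and "birkhoff_sum (box n) w + patch_cost n < card (box n :: (int^'d) set) * max_integral"
  shows "emeasure \<eta> (cylinder (box n) w) = 0"
proof -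
  have inv: "\<eta> \<in> inv_measures" and max: "integral\<^sup>L \<eta> \<phi> = max_integral"
    using assms(1) by (simp_all add: MM_def max_integral_def)
  interpret prob_space \<eta> using inv_measuresD(2)[OF inv] .
  obtain v where v: "card (box n :: (int^'d) set) * max_integral \<le> birkhoff_sum (box n) v"
    using exists_ge_integral[OF integrable_birkhoff_sum[OF inv]]
    by (auto simp: integral_birkhoff_sum[OF inv] max)
  define g where "g = birkhoff_sum (box n) v - birkhoff_sum (box n) w - patch_cost n"
  have "0 < g" using v assms(2) by (simp add: g_def)
  define a where "a = g / card (box (2 * n) :: (int^'d) set) * measure \<eta> (cylinder (box n) w)"
  define B where "B = CARD('d) * 2 ^ CARD('d) * var_total"
  have "a \<le> 0"
  proof (rule ccontr)
    assume "\<not> a \<le> 0"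
    obtain m :: nat where "B / a < m" using reals_Archimedean2 by blast
    then have "B < a * m" using \<open>\<not> a \<le> 0\<close> by (simp add: divide_less_eq mult.commute)
    also have "\<dots> \<le> a * (2 * real (m + n) + 1)" using \<open>\<not> a \<le> 0\<close> by (intro mult_left_mono) auto
    also have "\<dots> \<le> B"
      using measure_cylinder_linear_le[OF assms(1), where g=g and v=v and m="m + n"] \<open>0 < g\<close>
      unfolding a_def B_def g_def by simp
    finally show False by simp
  qed
  moreover have "0 < g / card (box (2 * n) :: (int^'d) set)"
    using \<open>0 < g\<close> by (simp add: card_box)
  ultimately have "measure \<eta> (cylinder (box n) w) \<le> 0"
    unfolding a_def mult_le_0_iff by auto
  then have "measure \<eta> (cylinder (box n) w) = 0"
    using measure_nonneg[of \<eta>] by (rule antisym)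
  then show ?thesis by (simp add: emeasure_eq_measure)
qed

lemma exists_patch_cost_lt:
  fixes \<delta> :: real
  assumes "0 < \<delta>"
  shows "\<exists>n. patch_cost n < \<delta> * card (box n :: (int^'d) set)"
proof -
  define B where "B = 3 * (CARD('d) * 2 ^ CARD('d)) * var_total"
  obtain m :: nat where "B / \<delta> < m" using reals_Archimedean2 by blast
  define n where "n = m + 1"
  have "patch_cost n * (2 * real n + 1)
      = (2 * (card (shell n :: (int^'d) set) * (2 * real n + 1))
         + card (shell (n + 1) :: (int^'d) set) * (2 * real n + 1)) * var_total"
    by (simp add: patch_cost_def algebra_simps)
  also have "\<dots> \<le> (3 * (CARD('d) * 2 ^ CARD('d) * card (box n :: (int^'d) set))) * var_total"
    using card_shell_mult_le[of n n, where 'd='d] card_shell_mult_le[of "n + 1" n, where 'd='d] var_total_nonneg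
    by (intro mult_right_mono) (auto simp: n_def)
  also have "\<dots> = B * card (box n :: (int^'d) set)"
    by (simp add: B_def)
  also have "\<dots> < \<delta> * (2 * real n + 1) * card (box n :: (int^'d) set)"
  proof -
    have "B < \<delta> * m" using \<open>B / \<delta> < m\<close> assms by (simp add: divide_less_eq mult.commute)
    also have "\<dots> \<le> \<delta> * (2 * real n + 1)" using assms by (intro mult_left_mono) (auto simp: n_def)
    finally show ?thesis by (intro mult_strict_right_mono) (simp_all add: card_box)
  qed
  finally have "patch_cost n * (2 * real n + 1) < (\<delta> * card (box n :: (int^'d) set)) * (2 * real n + 1)"
    by (simp add: mult_ac)
  then have "patch_cost n < \<delta> * card (box n :: (int^'d) set)"
    by (rule mult_right_less_imp_less) simp
  then show ?thesis ..
qed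

lemma exists_integral_lt_max_integral:
  assumes "\<exists>\<mu> \<in> inv_measures. \<exists>\<nu> \<in> inv_measures. integral\<^sup>L \<mu> \<phi> \<noteq> integral\<^sup>L \<nu> \<phi>"
  shows "\<exists>\<nu> \<in> inv_measures. integral\<^sup>L \<nu> \<phi> < max_integral"
proof -
  obtain \<mu> \<nu> where \<mu>\<nu>: "\<mu> \<in> inv_measures" "\<nu> \<in> inv_measures" "integral\<^sup>L \<mu> \<phi> \<noteq> integral\<^sup>L \<nu> \<phi>"
    using assms by blast
  then have "integral\<^sup>L \<mu> \<phi> \<le> max_integral" "integral\<^sup>L \<nu> \<phi> \<le> max_integral"
    by (simp_all add: integral_le_max_integral)
  with \<mu>\<nu> have "integral\<^sup>L \<mu> \<phi> < max_integral \<or> integral\<^sup>L \<nu> \<phi> < max_integral"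
    by (auto simp: less_le)
  with \<mu>\<nu> show ?thesis by blast
qed

end

theorem proposition4p2:
  fixes \<phi> :: "(int^'d::finite \<Rightarrow> 'a::{finite,discrete_topology}) \<Rightarrow> real"
  assumes cont: "continuous_on UNIV \<phi>"
    and summ: "summable (\<lambda>n. real n ^ (CARD('d) - 1) * var n \<phi>)"
    and nonconst: "\<exists>\<mu> \<in> inv_measures. \<exists>\<nu> \<in> inv_measures. integral\<^sup>L \<mu> \<phi> \<noteq> integral\<^sup>L \<nu> \<phi>"
  shows "\<exists>\<Lambda> w. finite \<Lambda> \<and> (\<forall>\<eta> \<in> MM \<phi>. emeasure \<eta> (cylinder \<Lambda> w) = 0)"
proof -
  interpret regular_potential \<phi> using cont summ by unfold_locales
  obtain \<nu> where \<nu>: "\<nu> \<in> inv_measures" "integral\<^sup>L \<nu> \<phi> < max_integral"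
    using exists_integral_lt_max_integral[OF nonconst] by blast
  interpret \<nu>: prob_space \<nu> using inv_measuresD(2)[OF \<nu>(1)] .
  obtain n where n: "patch_cost n < (max_integral - integral\<^sup>L \<nu> \<phi>) * card (box n :: (int^'d) set)"
    using exists_patch_cost_lt \<nu>(2) by fastforce
  obtain w where w: "birkhoff_sum (box n) w \<le> card (box n :: (int^'d) set) * integral\<^sup>L \<nu> \<phi>"
    using \<nu>.exists_le_integral[OF integrable_birkhoff_sum[OF \<nu>(1)]]
    by (auto simp: integral_birkhoff_sum[OF \<nu>(1)])
  have "birkhoff_sum (box n) w + patch_cost n < card (box n :: (int^'d) set) * max_integral"
    using w n by (simp add: algebra_simps)
  then show ?thesis
    using emeasure_cylinder_eq_0 by (intro exI[of _ "box n"] exI[of _ w]) auto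
qed

end
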